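(* Let $n\geq 4$ and let $T_n$ be the group with generators $z,t_1,\dots,t_{n-1}$ and relations $t_i^2=1$ ($1\le i\le n-1$), $(t_jt_{j+1})^3=1$ ($1\le j\le n-2$), $(t_kt_l)^2=z$ (for $k\le l-2$), $z^2=1$ and $zt_i=t_iz$ ($1\le i\le n-1$). Let $i,j\in\{1,\dots,n\}$ with $i\neq j$ and let $k\in\{1,\dots,n-1\}$. Then \[ s_k\triangleright [i\;j]=[s_k(i)\;s_k(j)]\,z . \]
   Context: $\mathbb{S}_n$ is the symmetric group, $s_k=(k\;k+1)$ denotes the adjacent transposition, and $p:T_n\to\mathbb{S}_n$ is the surjective homomorphism with $p(t_k)=s_k$, $p(z)=1$; its kernel is $\langle z\rangle$, which is central of order $2$. For $\sigma\in\mathbb{S}_n$ and $t\in T_n$, define $\sigma\triangleright t=\bar\sigma t\bar\sigma^{-1}$, where $\bar\sigma\in T_n$ is any element with $p(\bar\sigma)=\sigma$ (this is independent of the choice since $z$ is central). For $1\le i,j\le n$, $i\ne j$, the elements $[i\;j]\in T_n$ are defined inductively by $[i\;i+1]=t_i$; $[i\;j]=(s_i\triangleright[i+1\;j])\,z$ for $i+1<j$; and $[j\;i]=[i\;j]\,z$ for $i<j$. *)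

theory Defs
  imports "HOL-Algebra.Algebra"
begin

definition Tn_presented :: "('a, 'b) monoid_scheme \<Rightarrow> nat \<Rightarrow> 'a \<Rightarrow> (nat \<Rightarrow> 'a) \<Rightarrow> bool" where
  "Tn_presented G n z t \<longleftrightarrow>
     group G \<and> z \<in> carrier G \<and> (\<forall>i\<in>{1..n-1}. t i \<in> carrier G) \<and>
     carrier G = generate G (insert z (t ` {1..n-1})) \<and>
     (\<forall>i\<in>{1..n-1}. t i \<otimes>\<^bsub>G\<^esub> t i = \<one>\<^bsub>G\<^esub>) \<and>
     (\<forall>j\<in>{1..n-2}. (t j \<otimes>\<^bsub>G\<^esub> t (j+1)) [^]\<^bsub>G\<^esub> (3::nat) = \<one>\<^bsub>G\<^esub>) \<and>
     (\<forall>k\<in>{1..n-1}. \<forall>l\<in>{1..n-1}. k + 2 \<le> l \<longrightarrow>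
         (t k \<otimes>\<^bsub>G\<^esub> t l) [^]\<^bsub>G\<^esub> (2::nat) = z) \<and>
     z \<otimes>\<^bsub>G\<^esub> z = \<one>\<^bsub>G\<^esub> \<and>
     (\<forall>i\<in>{1..n-1}. z \<otimes>\<^bsub>G\<^esub> t i = t i \<otimes>\<^bsub>G\<^esub> z)"

definition sadj :: "nat \<Rightarrow> nat \<Rightarrow> nat" where
  "sadj k = Transposition.transpose k (Suc k)"

definition tri :: "('a, 'b) monoid_scheme \<Rightarrow> ('a \<Rightarrow> nat \<Rightarrow> nat) \<Rightarrow> (nat \<Rightarrow> nat) \<Rightarrow> 'a \<Rightarrow> 'a" where
  "tri G p \<sigma> x = (let g = (SOME g. g \<in> carrier G \<and> p g = \<sigma>) in
      g \<otimes>\<^bsub>G\<^esub> x \<otimes>\<^bsub>G\<^esub> inv\<^bsub>G\<^esub> g)"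

text \<open>brk_up G p z t i d = [i  i+d+1].\<close>
fun brk_up :: "('a, 'b) monoid_scheme \<Rightarrow> ('a \<Rightarrow> nat \<Rightarrow> nat) \<Rightarrow> 'a \<Rightarrow> (nat \<Rightarrow> 'a) \<Rightarrow> nat \<Rightarrow> nat \<Rightarrow> 'a" where
  "brk_up G p z t i 0 = t i"
| "brk_up G p z t i (Suc d) = tri G p (sadj i) (brk_up G p z t (Suc i) d) \<otimes>\<^bsub>G\<^esub> z"

definition brk :: "('a, 'b) monoid_scheme \<Rightarrow> ('a \<Rightarrow> nat \<Rightarrow> nat) \<Rightarrow> 'a \<Rightarrow> (nat \<Rightarrow> 'a) \<Rightarrow> nat \<Rightarrow> nat \<Rightarrow> 'a" where
  "brk G p z t i j =
     (if i < j then brk_up G p z t i (j - i - 1)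
      else brk_up G p z t j (i - j - 1) \<otimes>\<^bsub>G\<^esub> z)"

end

theory Submission
  imports Defs
begin

(*
  Since the kernel of p is generated by the central element z, every lift of s_k is t_k up to a
  central factor, so s_k acts by conjugation with t_k.  Write [a  j] = t_a [a+1  j] t_a z for
  a < j and compare t_k [a  j] t_k with [s_k a  s_k j] z according to the position of k.  For
  k = a - 1 this is the recursion itself, and for k = j it follows by induction on j - a from the
  braid relation, t_j commuting with t_a up to z.  The cases k = a and k = j - 1 are their
  inverses, since conjugation by t_k is an involution.  If s_k fixes a and j, then t_k commutes
  with [a  j] up to z, again by induction, using the braid relation when k = a + 1.  Finally
  [j  i] = [i  j] z reduces i > j to i < j.
*)

lemma (in group) generate_commute:
  assumes "S \<subseteq> carrier G" "x \<in> carrier G" "\<And>s. s \<in> S \<Longrightarrow> s \<otimes> x = x \<otimes> s"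
    and "h \<in> generate G S"
  shows "h \<otimes> x = x \<otimes> h"
proof -
  let ?C = "{g \<in> carrier G. g \<otimes> x = x \<otimes> g}"
  have "subgroup ?C G"
  proof (rule subgroupI)
    fix g assume "g \<in> ?C"
    then have g: "g \<in> carrier G" "g \<otimes> x = x \<otimes> g" by auto
    have "inv g \<otimes> x = inv g \<otimes> (x \<otimes> g) \<otimes> inv g"
      using g(1) assms(2) by (simp add: m_assoc)
    also have "\<dots> = inv g \<otimes> (g \<otimes> x) \<otimes> inv g"
      using g(2) by simp
    also have "\<dots> = x \<otimes> inv g"
      using g(1) assms(2) by (simp flip: m_assoc)
    finally show "inv g \<in> ?C"
      using g by simp
  next
    fix g h assume "g \<in> ?C" "h \<in> ?C"
    then show "g \<otimes> h \<in> ?C"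
      using assms(2) by (simp add: m_assoc) (metis m_assoc)
  qed (use assms(2) in auto)
  then have "generate G S \<subseteq> ?C"
    using assms(1,3) by (intro generate_subgroup_incl) auto
  then show ?thesis using assms(4) by blast
qed

locale Tn_projection =
  fixes G :: "('a, 'b) monoid_scheme" (structure)
    and n :: nat and z :: 'a and t :: "nat \<Rightarrow> 'a" and p :: "'a \<Rightarrow> nat \<Rightarrow> nat"
  assumes presented: "Tn_presented G n z t"
    and p_hom: "p \<in> hom G (sym_group n)"
    and p_t: "\<forall>m\<in>{1..n-1}. p (t m) = sadj m"
    and p_kernel: "kernel G (sym_group n) p = generate G {z}"

sublocale Tn_projection \<subseteq> group G
  using presented by (simp add: Tn_presented_def)

context Tn_projection
begin

lemma t_closed [simp]: "1 \<le> k \<Longrightarrow> k < n \<Longrightarrow> t k \<in> carrier G"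
  using presented unfolding Tn_presented_def by (elim conjE) auto

lemma z_closed [simp]: "z \<in> carrier G"
  using presented unfolding Tn_presented_def by blast

lemma t_t [simp]: "1 \<le> k \<Longrightarrow> k < n \<Longrightarrow> t k \<otimes> t k = \<one>"
  using presented unfolding Tn_presented_def by (elim conjE) auto

lemma t_t_cancel [simp]: "1 \<le> k \<Longrightarrow> k < n \<Longrightarrow> x \<in> carrier G \<Longrightarrow> t k \<otimes> (t k \<otimes> x) = x"
  by (simp flip: m_assoc)

lemma z_z [simp]: "z \<otimes> z = \<one>"
  using presented unfolding Tn_presented_def by blast

lemma z_central: "g \<in> carrier G \<Longrightarrow> g \<otimes> z = z \<otimes> g"
proof -
  assume g: "g \<in> carrier G"
  have gen: "carrier G = generate G (insert z (t ` {1..n-1}))"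
    and zt: "\<forall>i\<in>{1..n-1}. z \<otimes> t i = t i \<otimes> z"
    using presented unfolding Tn_presented_def by blast+
  show ?thesis
  proof (rule generate_commute)
    show "insert z (t ` {1..n-1}) \<subseteq> carrier G" by auto
    show "g \<in> generate G (insert z (t ` {1..n-1}))" using g gen by blast
    show "s \<otimes> z = z \<otimes> s" if "s \<in> insert z (t ` {1..n-1})" for s
      using that zt by auto
  qed simp
qed

lemma kernel_central: "c \<in> generate G {z} \<Longrightarrow> y \<in> carrier G \<Longrightarrow> c \<otimes> y = y \<otimes> c"
  by (rule generate_commute[of "{z}"]) (auto simp: z_central[of y])

lemma far_relation: "1 \<le> k \<Longrightarrow> l < n \<Longrightarrow> k + 2 \<le> l \<Longrightarrow> (t k \<otimes> t l) [^] (2::nat) = z"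
proof -
  assume "1 \<le> k" "l < n" "k + 2 \<le> l"
  moreover have "\<forall>k\<in>{1..n-1}. \<forall>l\<in>{1..n-1}. k + 2 \<le> l \<longrightarrow> (t k \<otimes> t l) [^] (2::nat) = z"
    using presented unfolding Tn_presented_def by blast
  ultimately show ?thesis by simp
qed

lemma braid_relation: "1 \<le> a \<Longrightarrow> Suc a < n \<Longrightarrow> (t a \<otimes> t (Suc a)) [^] (3::nat) = \<one>"
proof -
  assume "1 \<le> a" "Suc a < n"
  moreover have "\<forall>j\<in>{1..n-2}. (t j \<otimes> t (j+1)) [^] (3::nat) = \<one>"
    using presented unfolding Tn_presented_def by blast
  ultimately show ?thesis by simp
qed

lemma mult_z_left_comm: "x \<in> carrier G \<Longrightarrow> y \<in> carrier G \<Longrightarrow> x \<otimes> (z \<otimes> y) = z \<otimes> (x \<otimes> y)"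
  by (simp add: z_central[of x] flip: m_assoc)

lemma t_far_comm:
  assumes "1 \<le> k" "k < n" "1 \<le> l" "l < n" "k + 2 \<le> l \<or> l + 2 \<le> k"
  shows "t k \<otimes> t l = z \<otimes> (t l \<otimes> t k)"
proof -
  have flip: "t a \<otimes> t b = z \<otimes> (t b \<otimes> t a)" if "1 \<le> a" "b < n" "a + 2 \<le> b" for a b
  proof -
    have "t a \<otimes> t b \<otimes> (t a \<otimes> t b) = z"
      using far_relation[OF that] that by (simp add: numeral_2_eq_2)
    then have "z \<otimes> (t b \<otimes> t a) = t a \<otimes> t b \<otimes> (t a \<otimes> t b) \<otimes> (t b \<otimes> t a)"
      by simp
    also have "\<dots> = t a \<otimes> t b"
      using that by (simp add: m_assoc)
    finally show ?thesis ..
  qed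
  show ?thesis
  proof (cases "k + 2 \<le> l")
    case True
    then show ?thesis using assms flip[of k l] by simp
  next
    case False
    have "t k \<otimes> t l = z \<otimes> (z \<otimes> (t k \<otimes> t l))"
      using assms by (simp flip: m_assoc)
    also have "z \<otimes> (t k \<otimes> t l) = t l \<otimes> t k"
      using False assms flip[of l k] by simp
    finally show ?thesis .
  qed
qed

definition tconj :: "nat \<Rightarrow> 'a \<Rightarrow> 'a" where
  "tconj k x = t k \<otimes> x \<otimes> t k"

lemma tconj_closed [simp]: "1 \<le> k \<Longrightarrow> k < n \<Longrightarrow> x \<in> carrier G \<Longrightarrow> tconj k x \<in> carrier G"
  by (simp add: tconj_def)

lemma tconj_tconj [simp]: "1 \<le> k \<Longrightarrow> k < n \<Longrightarrow> x \<in> carrier G \<Longrightarrow> tconj k (tconj k x) = x"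
  by (simp add: tconj_def m_assoc)

lemma tconj_t_self: "1 \<le> k \<Longrightarrow> k < n \<Longrightarrow> tconj k (t k) = t k"
  by (simp add: tconj_def m_assoc)

lemma tconj_mult_z:
  "1 \<le> k \<Longrightarrow> k < n \<Longrightarrow> x \<in> carrier G \<Longrightarrow> tconj k (x \<otimes> z) = tconj k x \<otimes> z"
  by (simp add: tconj_def m_assoc mult_z_left_comm z_central[of "t k"])

lemma tconj_eq_mult_z_sym:
  assumes "1 \<le> k" "k < n" "x \<in> carrier G" "y \<in> carrier G" and "tconj k x = y \<otimes> z"
  shows "tconj k y = x \<otimes> z"
proof -
  have "x = tconj k (y \<otimes> z)" using assms by (metis tconj_tconj)
  then show ?thesis using assms by (simp add: tconj_mult_z m_assoc)
qed

lemma tconj_t_far: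
  assumes "1 \<le> k" "k < n" "1 \<le> l" "l < n" "k + 2 \<le> l \<or> l + 2 \<le> k"
  shows "tconj k (t l) = t l \<otimes> z"
  using assms by (simp add: tconj_def t_far_comm m_assoc z_central[of "t l"])

lemma tconj_far_comm:
  assumes "1 \<le> k" "k < n" "1 \<le> l" "l < n" "k + 2 \<le> l \<or> l + 2 \<le> k" "x \<in> carrier G"
  shows "tconj k (tconj l x) = tconj l (tconj k x)"
proof -
  have swap: "t k \<otimes> t l = z \<otimes> (t l \<otimes> t k)"
    using assms(1-5) by (rule t_far_comm)
  have "tconj k (tconj l x) = (t k \<otimes> t l) \<otimes> x \<otimes> (t l \<otimes> t k)"
    using assms by (simp add: tconj_def m_assoc)
  also have "\<dots> = z \<otimes> (t l \<otimes> t k \<otimes> x \<otimes> (t l \<otimes> t k))"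
    using assms by (subst swap) (simp add: m_assoc)
  also have "\<dots> = t l \<otimes> t k \<otimes> x \<otimes> (z \<otimes> (t l \<otimes> t k))"
    using assms by (simp add: m_assoc mult_z_left_comm)
  also have "\<dots> = tconj l (tconj k x)"
    using assms by (subst swap[symmetric]) (simp add: tconj_def m_assoc)
  finally show ?thesis .
qed

lemma tconj_t_braid:
  assumes "1 \<le> a" "Suc a < n"
  shows "tconj a (t (Suc a)) = tconj (Suc a) (t a)"
proof -
  have "t a \<otimes> t (Suc a) \<otimes> (t a \<otimes> t (Suc a)) \<otimes> (t a \<otimes> t (Suc a)) = \<one>"
    using braid_relation[OF assms] assms by (simp add: numeral_3_eq_3)
  then have "t (Suc a) \<otimes> t a \<otimes> t (Suc a) =
      t a \<otimes> t (Suc a) \<otimes> (t a \<otimes> t (Suc a)) \<otimes> (t a \<otimes> t (Suc a)) \<otimes> (t (Suc a) \<otimes> t a \<otimes> t (Suc a))"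
    using assms by simp
  also have "\<dots> = t a \<otimes> t (Suc a) \<otimes> t a"
    using assms by (simp add: m_assoc)
  finally show ?thesis by (simp add: tconj_def)
qed

lemma tconj_braid:
  assumes "1 \<le> a" "Suc a < n" "x \<in> carrier G"
  shows "tconj a (tconj (Suc a) (tconj a x)) = tconj (Suc a) (tconj a (tconj (Suc a) x))"
proof -
  have "tconj a (tconj (Suc a) (tconj a x)) = tconj a (t (Suc a)) \<otimes> x \<otimes> tconj a (t (Suc a))"
    using assms by (simp add: tconj_def m_assoc)
  also have "\<dots> = tconj (Suc a) (t a) \<otimes> x \<otimes> tconj (Suc a) (t a)"
    using assms by (simp add: tconj_t_braid)
  also have "\<dots> = tconj (Suc a) (tconj a (tconj (Suc a) x))"
    using assms by (simp add: tconj_def m_assoc)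
  finally show ?thesis .
qed

text \<open>The chosen lift of s_k is t_k times an element of the kernel, which is central.\<close>
lemma tri_sadj:
  assumes "1 \<le> k" "k < n" "x \<in> carrier G"
  shows "tri G p (sadj k) x = tconj k x"
proof -
  define g where "g = (SOME g. g \<in> carrier G \<and> p g = sadj k)"
  have "\<exists>g. g \<in> carrier G \<and> p g = sadj k"
    using p_t assms by (intro exI[of _ "t k"]) auto
  then have g: "g \<in> carrier G" "p g = sadj k"
    unfolding g_def by (metis (mono_tags, lifting) someI_ex)+
  define c where "c = g \<otimes> t k"
  have c: "c \<in> carrier G" and g_c: "g = c \<otimes> t k"
    using g assms by (simp_all add: c_def m_assoc)
  have "p c = p g \<circ> p (t k)"
    using hom_mult[OF p_hom g(1) t_closed[OF assms(1,2)]] by (simp add: c_def sym_group_def)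
  also have "\<dots> = id"
    using g p_t assms by (simp add: sadj_def)
  finally have "c \<in> kernel G (sym_group n) p"
    using c by (simp add: kernel_def sym_group_def)
  then have c_comm: "c \<otimes> tconj k x = tconj k x \<otimes> c"
    using assms p_kernel by (intro kernel_central) simp_all
  have "inv (t k) = t k"
    using assms by (intro inv_equality) simp_all
  then have "g \<otimes> x \<otimes> inv g = c \<otimes> tconj k x \<otimes> inv c"
    using c assms by (simp add: g_c inv_mult_group tconj_def m_assoc)
  also have "\<dots> = tconj k x"
    using c assms by (simp add: c_comm m_assoc)
  finally show ?thesis by (simp add: tri_def g_def)
qed

abbreviation B :: "nat \<Rightarrow> nat \<Rightarrow> 'a" where
  "B a d \<equiv> brk_up G p z t a d"

lemma brk_up_closed: "1 \<le> a \<Longrightarrow> a + d < n \<Longrightarrow> B a d \<in> carrier G"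
  by (induction d arbitrary: a) (simp_all add: tri_sadj)

lemma brk_up_Suc: "1 \<le> a \<Longrightarrow> Suc (a + d) < n \<Longrightarrow> B a (Suc d) = tconj a (B (Suc a) d) \<otimes> z"
  by (simp add: tri_sadj brk_up_closed)

declare brk_up.simps(2) [simp del]

lemma tconj_brk_up_extend_left:
  "1 \<le> k \<Longrightarrow> Suc (k + d) < n \<Longrightarrow> tconj k (B (Suc k) d) = B k (Suc d) \<otimes> z"
  by (simp add: brk_up_Suc brk_up_closed m_assoc)

lemma tconj_brk_up_shrink_left:
  "1 \<le> a \<Longrightarrow> Suc (a + d) < n \<Longrightarrow> tconj a (B a (Suc d)) = B (Suc a) d \<otimes> z"
  by (rule tconj_eq_mult_z_sym) (simp_all add: tconj_brk_up_extend_left brk_up_closed)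

lemma tconj_brk_up_extend_right:
  "1 \<le> a \<Longrightarrow> Suc (a + d) < n \<Longrightarrow> tconj (Suc (a + d)) (B a d) = B a (Suc d) \<otimes> z"
proof (induction d arbitrary: a)
  case 0
  then show ?case
    by (simp add: tconj_t_braid brk_up_Suc m_assoc)
next
  case (Suc d)
  have "tconj (Suc (a + Suc d)) (B a (Suc d))
      = tconj a (tconj (Suc (a + Suc d)) (B (Suc a) d)) \<otimes> z"
    using Suc.prems by (simp add: brk_up_Suc brk_up_closed tconj_mult_z tconj_far_comm)
  also have "\<dots> = B a (Suc (Suc d)) \<otimes> z"
    using Suc.prems Suc.IH[of "Suc a"] by (simp add: brk_up_Suc brk_up_closed tconj_mult_z)
  finally show ?case .
qed

lemma tconj_brk_up_shrink_right:
  "1 \<le> a \<Longrightarrow> Suc (a + d) < n \<Longrightarrow> tconj (a + Suc d) (B a (Suc d)) = B a d \<otimes> z"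
  by (rule tconj_eq_mult_z_sym) (simp_all add: tconj_brk_up_extend_right brk_up_closed)

lemma tconj_brk_up_disjoint:
  assumes "1 \<le> a" "a + d < n" "1 \<le> k" "k < n" "{k, Suc k} \<inter> {a, Suc (a + d)} = {}"
  shows "tconj k (B a d) = B a d \<otimes> z"
  using assms
proof (induction d arbitrary: a k rule: less_induct)
  case (less d a k)
  consider "d = 0" | d' where "d = Suc d'" "k \<noteq> Suc a"
    | d' where "d = Suc (Suc d')" "k = Suc a"
    using less.prems by (cases d; cases "d - 1") auto
  then show ?case
  proof cases
    case 1
    then have "k + 2 \<le> a \<or> a + 2 \<le> k" using less.prems by auto
    then show ?thesis using 1 less.prems by (simp add: tconj_t_far)
  next
    case (2 d')
    let ?X = "B (Suc a) d'"
    have far: "k + 2 \<le> a \<or> a + 2 \<le> k" using 2 less.prems by auto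
    have "tconj k ?X = ?X \<otimes> z"
      using 2 less.prems by (intro less.IH) auto
    then have "tconj k (tconj a ?X) = tconj a ?X \<otimes> z"
      using 2 less.prems far by (simp add: tconj_far_comm brk_up_closed tconj_mult_z)
    then show ?thesis
      using 2 less.prems by (simp add: brk_up_Suc brk_up_closed tconj_mult_z)
  next
    case (3 d')
    let ?Y = "B (Suc (Suc a)) d'"
    have Y: "?Y \<in> carrier G" using 3 less.prems by (simp add: brk_up_closed)
    have "tconj a ?Y = ?Y \<otimes> z"
      using 3 less.prems by (intro less.IH) auto
    then have "tconj (Suc a) (tconj a (tconj (Suc a) ?Y)) = tconj a (tconj (Suc a) ?Y) \<otimes> z"
      using 3 less.prems Y by (simp add: tconj_braid[symmetric] tconj_mult_z)
    then show ?thesis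
      using 3 less.prems Y by (simp add: brk_up_Suc brk_up_closed tconj_mult_z m_assoc)
  qed
qed

abbreviation br :: "nat \<Rightarrow> nat \<Rightarrow> 'a" where
  "br i j \<equiv> brk G p z t i j"

lemma tconj_brk_up:
  assumes "1 \<le> a" "a + d < n" "1 \<le> k" "k < n"
  shows "tconj k (B a d) = br (sadj k a) (sadj k (Suc (a + d))) \<otimes> z"
proof -
  consider "Suc k = a" | "k = a" "d = 0" | d' where "k = a" "d = Suc d'"
    | d' where "k = a + d" "d = Suc d'" | "k = Suc (a + d)"
    | "{k, Suc k} \<inter> {a, Suc (a + d)} = {}"
    by (cases d) auto
  then show ?thesis
  proof cases
    case 1
    then show ?thesis
      using assms tconj_brk_up_extend_left[of k d] by (simp add: sadj_def transpose_def brk_def)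
  next
    case 2
    then show ?thesis
      using assms tconj_t_self[of a] by (simp add: sadj_def transpose_def brk_def m_assoc)
  next
    case (3 d')
    then show ?thesis
      using assms tconj_brk_up_shrink_left[of a d'] by (simp add: sadj_def transpose_def brk_def)
  next
    case (4 d')
    then show ?thesis
      using assms tconj_brk_up_shrink_right[of a d'] by (simp add: sadj_def transpose_def brk_def)
  next
    case 5
    then show ?thesis
      using assms tconj_brk_up_extend_right[of a d] by (simp add: sadj_def transpose_def brk_def)
  next
    case 6
    then show ?thesis
      using assms tconj_brk_up_disjoint[of a d k] by (simp add: sadj_def transpose_def brk_def)
  qed
qed

lemma brk_closed: "i \<in> {1..n} \<Longrightarrow> j \<in> {1..n} \<Longrightarrow> i \<noteq> j \<Longrightarrow> br i j \<in> carrier G"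
  by (auto simp: brk_def brk_up_closed)

lemma brk_swap: "i \<in> {1..n} \<Longrightarrow> j \<in> {1..n} \<Longrightarrow> i \<noteq> j \<Longrightarrow> br j i = br i j \<otimes> z"
  by (cases "i < j") (auto simp: brk_def brk_up_closed m_assoc)

lemma tconj_brk:
  assumes "i \<in> {1..n}" "j \<in> {1..n}" "i \<noteq> j" "1 \<le> k" "k < n"
  shows "tconj k (br i j) = br (sadj k i) (sadj k j) \<otimes> z"
proof (cases "i < j")
  case True
  then show ?thesis
    using assms tconj_brk_up[of i "j - i - 1" k] by (simp add: brk_def)
next
  case False
  have s: "sadj k j \<in> {1..n}" "sadj k i \<in> {1..n}" "sadj k j \<noteq> sadj k i"
    using assms by (auto simp: sadj_def transpose_def)
  from False have "tconj k (br i j) = br (sadj k j) (sadj k i) \<otimes> z \<otimes> z"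
    using assms tconj_brk_up[of j "i - j - 1" k] by (simp add: brk_def brk_up_closed tconj_mult_z)
  also have "\<dots> = br (sadj k i) (sadj k j) \<otimes> z"
    using brk_swap[OF s] brk_closed[OF s] by (simp add: m_assoc)
  finally show ?thesis .
qed

end

theorem lemma3p4:
  fixes G :: "('a, 'b) monoid_scheme" and n :: nat and z :: 'a and t :: "nat \<Rightarrow> 'a"
    and p :: "'a \<Rightarrow> nat \<Rightarrow> nat" and i j k :: nat
  assumes "n \<ge> 4"
    and "Tn_presented G n z t"
    and "z \<noteq> \<one>\<^bsub>G\<^esub>"
    and "p \<in> hom G (sym_group n)"
    and "\<forall>m\<in>{1..n-1}. p (t m) = sadj m"
    and "p z = id"
    and "kernel G (sym_group n) p = generate G {z}"
    and "i \<in> {1..n}" and "j \<in> {1..n}" and "i \<noteq> j" and "k \<in> {1..n-1}"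
  shows "tri G p (sadj k) (brk G p z t i j) = brk G p z t (sadj k i) (sadj k j) \<otimes>\<^bsub>G\<^esub> z"
proof -
  interpret Tn_projection G n z t p
    using assms(2,4,5,7) by unfold_locales
  have k: "1 \<le> k" "k < n"
    using assms(11) by auto
  have "brk G p z t i j \<in> carrier G"
    using assms(8-10) by (rule brk_closed)
  then show ?thesis
    using tri_sadj[OF k] tconj_brk[OF assms(8-10) k] by simp
qed

end
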